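(* Assume standing assumption (A), let $(x^*,\lambda^* )$ be a KKT pair, let $\rho>0$, and let $\hat x\in X$, $\hat\lambda\in\mathbb R^J_+$ be fixed vectors. Let $C:X\times\mathbb R^J_+\to\mathbb R$ be a function such that $$F(x)^T(\hat x-x)+J^{-1}f(\hat x)^T\lambda\ \le\ \Phi_\rho(x,\hat\lambda)+C(x,\lambda)\qquad\text{for all }x\in X,\ \lambda\in\mathbb R^J_+.$$ Then: (i) $J^{-1}\mathbf 1^T[f(\hat x)]_+\le C(x^*,\tilde\lambda)$, where $\tilde\lambda\in\mathbb R^J_+$ is defined by $\tilde\lambda_j=1+\lambda^*_j$ if $f_j(\hat x)>0$ and $\tilde\lambda_j=0$ otherwise; (ii) $\sup_{x\in\mathcal X}F(x)^T(\hat x-x)\le\sup_{x\in\mathcal X}C(x,0)$.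
   Context: Let $n,J\ge 1$ be integers, $[J]=\{1,\dots,J\}$, $X\subseteq\mathbb R^n$, $F:\mathbb R^n\to\mathbb R^n$, and $f_1,\dots,f_J:\mathbb R^n\to\mathbb R$; write $f(x)=(f_1(x),\dots,f_J(x))^T$, $[a]_+=\max(a,0)$ componentwise, $\mathbf 1$ the all-ones vector, and $\mathcal X=\{x\in X: f_j(x)\le 0\ \forall j\in[J]\}$. Standing assumption (A): (i) $F$ is continuous and monotone on $X$; (ii) each $f_j$ is convex; (iii) $X$ is nonempty, compact and convex; (iv) (Slater) there exists $\hat x\in X$ with $f_j(\hat x)<0$ for all $j$. A pair $(x^*,\lambda^* )$ is a KKT pair if: $x^*\in X$; $\lambda^*\ge 0$, $f(x^* )\le 0$, $\lambda_j^*f_j(x^* )=0$ for all $j$; and there exist $g_j\in\partial f_j(x^* )$ with $0\in F(x^* )+J^{-1}\sum_j\lambda_j^*g_j+\mathcal N_X(x^* )$. For $\rho>0$, $u,v\in\mathbb R$ let $\phi_\rho(u,v)=uv+\frac{\rho}{2}u^2$ if $\rho u+v\ge 0$ and $\phi_\rho(u,v)=-\frac{v^2}{2\rho}$ otherwise, and for $x\in\mathbb R^n$, $\lambda\in\mathbb R^J$ let $\Phi_\rho(x,\lambda)=\frac1J\sum_{j=1}^J\phi_\rho(f_j(x),\lambda^{(j)})$, where $\lambda^{(j)}$ is the $j$-th component of $\lambda$. *)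

theory Defs
  imports "HOL-Analysis.Analysis"
begin

text \<open>Vectors of R^n: elements of an abstract Euclidean space 'a.
  Constraint indices [J]: a finite type 'j, J = CARD('j); multipliers lambda :: real^'j.\<close>

definition subdiff :: "('a::real_inner \<Rightarrow> real) \<Rightarrow> 'a \<Rightarrow> 'a set" where
  "subdiff g x = {v. \<forall>y. g y \<ge> g x + inner v (y - x)}"

definition normal_cone :: "'a::real_inner set \<Rightarrow> 'a \<Rightarrow> 'a set" where
  "normal_cone X x = {v. \<forall>y\<in>X. inner v (y - x) \<le> 0}"

definition monotone_op_on :: "'a::real_inner set \<Rightarrow> ('a \<Rightarrow> 'a) \<Rightarrow> bool" where
  "monotone_op_on X F \<longleftrightarrow> (\<forall>x\<in>X. \<forall>y\<in>X. inner (F x - F y) (x - y) \<ge> 0)"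

definition standing_A ::
  "'a::euclidean_space set \<Rightarrow> ('a \<Rightarrow> 'a) \<Rightarrow> ('j::finite \<Rightarrow> 'a \<Rightarrow> real) \<Rightarrow> bool" where
  "standing_A X F f \<longleftrightarrow>
     continuous_on X F \<and> monotone_op_on X F \<and>
     (\<forall>j. convex_on UNIV (f j)) \<and>
     X \<noteq> {} \<and> compact X \<and> convex X \<and>
     (\<exists>xs\<in>X. \<forall>j. f j xs < 0)"

definition feasible :: "'a set \<Rightarrow> ('j \<Rightarrow> 'a \<Rightarrow> real) \<Rightarrow> 'a set" where
  "feasible X f = {x\<in>X. \<forall>j. f j x \<le> 0}"

definition KKT_pair ::
  "'a::euclidean_space set \<Rightarrow> ('a \<Rightarrow> 'a) \<Rightarrow> ('j::finite \<Rightarrow> 'a \<Rightarrow> real) \<Rightarrow> 'a \<Rightarrow> real^'j \<Rightarrow> bool" where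
  "KKT_pair X F f xs ls \<longleftrightarrow>
     xs \<in> X \<and> (\<forall>j. ls $ j \<ge> 0) \<and> (\<forall>j. f j xs \<le> 0) \<and> (\<forall>j. ls $ j * f j xs = 0) \<and>
     (\<exists>g. (\<forall>j. g j \<in> subdiff (f j) xs) \<and>
          - (F xs + (1 / real CARD('j)) *\<^sub>R (\<Sum>j\<in>UNIV. ls $ j *\<^sub>R g j)) \<in> normal_cone X xs)"

definition phi :: "real \<Rightarrow> real \<Rightarrow> real \<Rightarrow> real" where
  "phi \<rho> u v = (if \<rho> * u + v \<ge> 0 then u * v + \<rho> / 2 * u\<^sup>2 else - (v\<^sup>2) / (2 * \<rho>))"

definition Phi :: "real \<Rightarrow> ('j::finite \<Rightarrow> 'a \<Rightarrow> real) \<Rightarrow> 'a \<Rightarrow> real^'j \<Rightarrow> real" where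
  "Phi \<rho> f x l = (1 / real CARD('j)) * (\<Sum>j\<in>UNIV. phi \<rho> (f j x) (l $ j))"

end

theory Submission
  imports Defs
begin

text \<open>At a KKT pair the Lagrangian variational inequality, obtained by testing the normal cone
  inclusion with \<open>xh - x*\<close> and using the subgradient inequalities together with complementary
  slackness, gives \<open>F(x*)\<^sup>T(xh - x*) + J\<^sup>-\<^sup>1 f(xh)\<^sup>T\<lambda>* \<ge> 0\<close>. Moreover \<open>\<Phi>\<^sub>\<rho>(x, \<lambda>) \<le> 0\<close> whenever \<open>x\<close> is
  feasible and \<open>\<lambda> \<ge> 0\<close>. Evaluating the hypothesis at \<open>(x*, \<lambda>~)\<close>, where
  \<open>f(xh)\<^sup>T\<lambda>~ \<ge> \<one>\<^sup>T[f(xh)]\<^sub>+ + f(xh)\<^sup>T\<lambda>*\<close>, gives (i); evaluating it at \<open>(x, 0)\<close> for feasible \<open>x\<close>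
  gives (ii).\<close>

lemma phi_nonpos:
  assumes "\<rho> > 0" "u \<le> 0" "v \<ge> 0"
  shows "phi \<rho> u v \<le> 0"
proof (cases "\<rho> * u + v \<ge> 0")
  case True
  have "\<rho> * u \<le> 0" using assms by (simp add: mult_nonneg_nonpos)
  with True have "v + \<rho> / 2 * u \<ge> 0" by linarith
  with \<open>u \<le> 0\<close> have "u * (v + \<rho> / 2 * u) \<le> 0" by (rule mult_nonpos_nonneg)
  with True show ?thesis unfolding phi_def by (simp add: algebra_simps power2_eq_square)
next
  case False
  with \<open>\<rho> > 0\<close> show ?thesis unfolding phi_def by simp
qed

lemma Phi_nonpos:
  fixes f :: "'j::finite \<Rightarrow> 'a \<Rightarrow> real"
  assumes "\<rho> > 0" "\<forall>j. f j x \<le> 0" "\<forall>j. l $ j \<ge> 0"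
  shows "Phi \<rho> f x l \<le> 0"
proof -
  have "(\<Sum>j\<in>UNIV. phi \<rho> (f j x) (l $ j)) \<le> 0"
    by (rule sum_nonpos) (use assms phi_nonpos in auto)
  then show ?thesis unfolding Phi_def by (simp add: divide_nonpos_nonneg)
qed

lemma KKT_pair_variational_inequality:
  fixes f :: "'j::finite \<Rightarrow> 'a::euclidean_space \<Rightarrow> real"
  assumes kkt: "KKT_pair X F f xs ls" and y: "y \<in> X"
  shows "0 \<le> inner (F xs) (y - xs) + (1 / real CARD('j)) * (\<Sum>j\<in>UNIV. f j y * ls $ j)"
proof -
  define c where "c = 1 / real CARD('j)"
  have ls: "\<forall>j. ls $ j \<ge> 0" and slack: "\<forall>j. ls $ j * f j xs = 0"
    using kkt unfolding KKT_pair_def by auto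
  obtain g where g: "\<forall>j. g j \<in> subdiff (f j) xs"
    and nc: "- (F xs + c *\<^sub>R (\<Sum>j\<in>UNIV. ls $ j *\<^sub>R g j)) \<in> normal_cone X xs"
    using kkt unfolding KKT_pair_def c_def by auto
  from nc y have "inner (- (F xs + c *\<^sub>R (\<Sum>j\<in>UNIV. ls $ j *\<^sub>R g j))) (y - xs) \<le> 0"
    unfolding normal_cone_def by blast
  then have normal: "0 \<le> inner (F xs) (y - xs) + c * (\<Sum>j\<in>UNIV. ls $ j * inner (g j) (y - xs))"
    by (simp add: inner_add_left inner_diff_left inner_sum_left)
  have "(\<Sum>j\<in>UNIV. ls $ j * inner (g j) (y - xs)) \<le> (\<Sum>j\<in>UNIV. f j y * ls $ j)"
  proof (rule sum_mono)
    fix j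
    have "f j xs + inner (g j) (y - xs) \<le> f j y" using g unfolding subdiff_def by auto
    then have "ls $ j * f j xs + ls $ j * inner (g j) (y - xs) \<le> ls $ j * f j y"
      using ls by (metis distrib_left mult_left_mono)
    with slack[rule_format, of j] show "ls $ j * inner (g j) (y - xs) \<le> f j y * ls $ j"
      by (simp only: mult.commute[of "f j y"])
  qed
  then have "c * (\<Sum>j\<in>UNIV. ls $ j * inner (g j) (y - xs)) \<le> c * (\<Sum>j\<in>UNIV. f j y * ls $ j)"
    by (simp add: c_def divide_right_mono)
  with normal show ?thesis unfolding c_def by linarith
qed

lemma sum_pos_part_add_le:
  fixes a :: "'j::finite \<Rightarrow> real"
  assumes "\<forall>j. l $ j \<ge> 0"
  shows "(\<Sum>j\<in>UNIV. max (a j) 0) + (\<Sum>j\<in>UNIV. a j * l $ j)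
           \<le> (\<Sum>j\<in>UNIV. a j * (\<chi> j. if a j > 0 then 1 + l $ j else 0) $ j)"
proof -
  have "max (a j) 0 + a j * l $ j \<le> a j * (if a j > 0 then 1 + l $ j else 0)" for j
    using assms mult_nonpos_nonneg[of "a j" "l $ j"] by (auto simp: algebra_simps)
  then show ?thesis by (simp add: sum.distrib[symmetric] sum_mono)
qed

theorem mainTheorem3:
  fixes X :: "'a::euclidean_space set" and F :: "'a \<Rightarrow> 'a"
    and f :: "'j::finite \<Rightarrow> 'a \<Rightarrow> real"
    and xs :: 'a and ls :: "real^'j" and \<rho> :: real
    and xh :: 'a and lh :: "real^'j" and C :: "'a \<Rightarrow> real^'j \<Rightarrow> real"
  assumes A: "standing_A X F f"
    and kkt: "KKT_pair X F f xs ls"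
    and rho: "\<rho> > 0"
    and xh: "xh \<in> X" and lh: "\<forall>j. lh $ j \<ge> 0"
    and bound: "\<And>x l. x \<in> X \<Longrightarrow> (\<forall>j. l $ j \<ge> 0) \<Longrightarrow>
         inner (F x) (xh - x) + (1 / real CARD('j)) * (\<Sum>j\<in>UNIV. f j xh * l $ j)
           \<le> Phi \<rho> f x lh + C x l"
  shows "((1 / real CARD('j)) * (\<Sum>j\<in>UNIV. max (f j xh) 0)
           \<le> C xs (\<chi> j. if f j xh > 0 then 1 + ls $ j else 0)) \<and>
         ((SUP x\<in>feasible X f. ereal (inner (F x) (xh - x)))
           \<le> (SUP x\<in>feasible X f. ereal (C x 0)))"
proof
  define lt where "lt = (\<chi> j. if f j xh > 0 then 1 + ls $ j else 0)"
  have xs: "xs \<in> X" and ls: "\<forall>j. ls $ j \<ge> 0" and fxs: "\<forall>j. f j xs \<le> 0"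
    using kkt unfolding KKT_pair_def by auto
  have lt: "\<forall>j. lt $ j \<ge> 0" unfolding lt_def using ls by simp
  have "(1 / real CARD('j)) * ((\<Sum>j\<in>UNIV. max (f j xh) 0) + (\<Sum>j\<in>UNIV. f j xh * ls $ j))
          \<le> (1 / real CARD('j)) * (\<Sum>j\<in>UNIV. f j xh * lt $ j)"
    using sum_pos_part_add_le[OF ls, of "\<lambda>j. f j xh"] unfolding lt_def
    by (simp add: divide_right_mono)
  with bound[OF xs lt] KKT_pair_variational_inequality[OF kkt xh] Phi_nonpos[of \<rho> f xs lh] rho fxs lh
  show "(1 / real CARD('j)) * (\<Sum>j\<in>UNIV. max (f j xh) 0) \<le> C xs lt"
    by (simp add: distrib_left)
next
  show "(SUP x\<in>feasible X f. ereal (inner (F x) (xh - x))) \<le> (SUP x\<in>feasible X f. ereal (C x 0))"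
  proof (rule SUP_mono)
    fix x assume x: "x \<in> feasible X f"
    then have "x \<in> X" and "\<forall>j. f j x \<le> 0" unfolding feasible_def by auto
    with bound[of x 0] Phi_nonpos[of \<rho> f x lh] rho lh have "inner (F x) (xh - x) \<le> C x 0"
      by fastforce
    with x show "\<exists>m\<in>feasible X f. ereal (inner (F x) (xh - x)) \<le> ereal (C m 0)" by auto
  qed
qed

end
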